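(* Let $d\ge 2$ and let $(C_1,\dots,C_R)$ be a solution of period $R$ to the board game on the $d \times d$ lattice (as defined in the context). Then there exists a periodic measurement schedule of the Bacon-Shor check operators on the $d\times d$ lattice with period $R$ whose steady-state sequence of instantaneous stabilizer groups corresponds to the coloring sequence $(C_1,\dots,C_R)$ (i.e., in the steady-state round corresponding to $C_j$, the instantaneous stabilizer group contains, up to sign, $\overline{X}_b$ for every red box $b$ of $C_j$ and $\overline{Z}_b$ for every blue box $b$ of $C_j$), and which produces detectors of weight $O(Rd)$.
   Context: The Bacon-Shor code on a $d\times d$ square lattice has one qubit at each vertex $(i,j)$ (row $i$, column $j$, $0\le i,j\le d-1$); its checks are $X_{i,j}X_{i,j+1}$ on horizontal edges and $Z_{i,j}Z_{i+1,j}$ on vertical edges. The $(d-1)^2$ unit squares (plaquettes) of the lattice are called boxes; each box corresponds to a gauge qubit. For the box $b$ between qubit rows $r,r+1$ and qubit columns $c,c+1$, define $\overline{X}_b=\prod_{k\ge r+1} X_{k,c}X_{k,c+1}$ (the product of all $XX$ checks in that plaquette column lying above the box) and $\overline{Z}_b=\prod_{k\ge c+1} Z_{r,k}Z_{r+1,k}$ (the product of all $ZZ$ checks in that plaquette row lying to the right of the box). A coloring assigns each box the color red or blue; red means $\overline{X}_b$ is fixed (an element, up to sign, of the instantaneous stabilizer group, i.e. the stabilizer group of the state after the current round of measurements) and blue means $\overline{Z}_b$ is fixed. A vertical (horizontal) strip is a set of consecutive boxes in one column (row). Allowed moves: coloring $C_{j+1}$ follows $C_j$ if it is obtained from $C_j$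 by, for some red boxes of $C_j$, coloring red a vertical strip in that box's column containing the box, and, for some blue boxes of $C_j$, coloring blue a horizontal strip in that box's row containing the box, all other boxes keeping their colors. A solution of period $R$ to the board game is a sequence of colorings $(C_1,\dots,C_R)$ such that $C_{j+1}$ follows $C_j$ for $1\le j<R$ and $C_1$ follows $C_R$, and such that (a) for each column of boxes there is some $C_j$ in which that column is entirely red, and for each row of boxes there is some $C_j$ in which that row is entirely blue; (b) in every $C_j$, each column contains at least one red box and each row contains at least one blue box. A detector is a product $D$ of measurement outcomes from rounds $r_1<\dots<r_K$ such that each partial Pauli product over rounds $r_1,\dots,r_J$ ($J<K$) commutes with every check measured in rounds $r_J+1,\dots,r_{J+1}$, and the full product of the measured Pauli operators is proportional to the identity. Its weight is the sum of the weights (number of qubits acted on nontrivially) of all the measured Pauli operators appearing in it. *)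

theory Defs
  imports Main
begin

text \<open>Qubits are lattice vertices (i,j) = (row, column). A Pauli operator up to
phase is represented by its X-support and Z-support (a Y on a qubit means the
qubit is in both).\<close>

type_synonym qubit = "nat \<times> nat"
type_synonym pauli = "qubit set \<times> qubit set"

definition symd :: "'a set \<Rightarrow> 'a set \<Rightarrow> 'a set" where
  "symd A B = (A - B) \<union> (B - A)"

definition pmul :: "pauli \<Rightarrow> pauli \<Rightarrow> pauli" where
  "pmul p q = (symd (fst p) (fst q), symd (snd p) (snd q))"

definition pid :: pauli where
  "pid = ({}, {})"

definition commute :: "pauli \<Rightarrow> pauli \<Rightarrow> bool" where
  "commute p q \<longleftrightarrow> even (card (fst p \<inter> snd q) + card (snd p \<inter> fst q))"

definition pweight :: "pauli \<Rightarrow> nat" where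
  "pweight p = card (fst p \<union> snd p)"

inductive_set pgen :: "pauli set \<Rightarrow> pauli set" for M where
  pgen_id: "pid \<in> pgen M"
| pgen_mul: "p \<in> M \<Longrightarrow> q \<in> pgen M \<Longrightarrow> pmul p q \<in> pgen M"

definition XX :: "nat \<Rightarrow> nat \<Rightarrow> pauli" where
  "XX i j = ({(i, j), (i, Suc j)}, {})"

definition ZZ :: "nat \<Rightarrow> nat \<Rightarrow> pauli" where
  "ZZ i j = ({}, {(i, j), (Suc i, j)})"

definition bs_checks :: "nat \<Rightarrow> pauli set" where
  "bs_checks d = {XX i j | i j. i < d \<and> Suc j < d} \<union> {ZZ i j | i j. Suc i < d \<and> j < d}"

text \<open>Box (r,c): plaquette between qubit rows r,r+1 and qubit columns c,c+1.\<close>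
definition boxes :: "nat \<Rightarrow> (nat \<times> nat) set" where
  "boxes d = {0..<d-1} \<times> {0..<d-1}"

definition Xbar :: "nat \<Rightarrow> nat \<times> nat \<Rightarrow> pauli" where
  "Xbar d b = ({(k, snd b) | k. fst b + 1 \<le> k \<and> k < d} \<union> {(k, Suc (snd b)) | k. fst b + 1 \<le> k \<and> k < d}, {})"

definition Zbar :: "nat \<Rightarrow> nat \<times> nat \<Rightarrow> pauli" where
  "Zbar d b = ({}, {(fst b, k) | k. snd b + 1 \<le> k \<and> k < d} \<union> {(Suc (fst b), k) | k. snd b + 1 \<le> k \<and> k < d})"

text \<open>A coloring: True = red, False = blue (only values on boxes matter).\<close>
type_synonym coloring = "nat \<times> nat \<Rightarrow> bool"

definition red_strip :: "nat \<Rightarrow> coloring \<Rightarrow> (nat \<times> nat) set \<Rightarrow> bool" where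
  "red_strip d C S \<longleftrightarrow> (\<exists>c a b r. a \<le> r \<and> r \<le> b \<and> b < d - 1 \<and> c < d - 1 \<and> C (r, c)
      \<and> S = {(k, c) | k. a \<le> k \<and> k \<le> b})"

definition blue_strip :: "nat \<Rightarrow> coloring \<Rightarrow> (nat \<times> nat) set \<Rightarrow> bool" where
  "blue_strip d C S \<longleftrightarrow> (\<exists>r a b c. a \<le> c \<and> c \<le> b \<and> b < d - 1 \<and> r < d - 1 \<and> \<not> C (r, c)
      \<and> S = {(r, k) | k. a \<le> k \<and> k \<le> b})"

definition follows :: "nat \<Rightarrow> coloring \<Rightarrow> coloring \<Rightarrow> bool" where
  "follows d C C' \<longleftrightarrow> (\<exists>Rs Bs. (\<forall>S\<in>Rs. red_strip d C S) \<and> (\<forall>S\<in>Bs. blue_strip d C S)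
      \<and> \<Union>Rs \<inter> \<Union>Bs = {}
      \<and> (\<forall>b\<in>boxes d. C' b = (if b \<in> \<Union>Rs then True else if b \<in> \<Union>Bs then False else C b)))"

text \<open>Solution of period R, colorings C 0, ..., C (R-1) (paper's C_1..C_R).\<close>
definition solution :: "nat \<Rightarrow> nat \<Rightarrow> (nat \<Rightarrow> coloring) \<Rightarrow> bool" where
  "solution d R C \<longleftrightarrow> 0 < R
     \<and> (\<forall>j. Suc j < R \<longrightarrow> follows d (C j) (C (Suc j)))
     \<and> follows d (C (R - 1)) (C 0)
     \<and> (\<forall>c < d - 1. \<exists>j < R. \<forall>r < d - 1. C j (r, c))
     \<and> (\<forall>r < d - 1. \<exists>j < R. \<forall>c < d - 1. \<not> C j (r, c))
     \<and> (\<forall>j < R. (\<forall>c < d - 1. \<exists>r < d - 1. C j (r, c)) \<and> (\<forall>r < d - 1. \<exists>c < d - 1. \<not> C j (r, c)))"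

definition schedule :: "nat \<Rightarrow> nat \<Rightarrow> (nat \<Rightarrow> pauli set) \<Rightarrow> bool" where
  "schedule d R M \<longleftrightarrow> (\<forall>t. M t \<subseteq> bs_checks d \<and> (\<forall>p\<in>M t. \<forall>q\<in>M t. commute p q)
      \<and> M (t + R) = M t)"

definition meas_update :: "pauli set \<Rightarrow> pauli set \<Rightarrow> pauli set" where
  "meas_update S Ms = pgen ({s \<in> S. \<forall>m\<in>Ms. commute s m} \<union> Ms)"

text \<open>isg M t: instantaneous stabilizer group (up to sign) after the first t rounds,
starting from the maximally mixed state (trivial group).\<close>
fun isg :: "(nat \<Rightarrow> pauli set) \<Rightarrow> nat \<Rightarrow> pauli set" where
  "isg M 0 = {pid}"
| "isg M (Suc t) = meas_update (isg M t) (M t)"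

text \<open>A measurement event is a pair (round, measured check).\<close>
type_synonym event = "nat \<times> pauli"

definition eprod :: "event set \<Rightarrow> pauli" where
  "eprod E = ({q. odd (card {e\<in>E. q \<in> fst (snd e)})}, {q. odd (card {e\<in>E. q \<in> snd (snd e)})})"

definition detector :: "(nat \<Rightarrow> pauli set) \<Rightarrow> event set \<Rightarrow> bool" where
  "detector M D \<longleftrightarrow> finite D \<and> D \<noteq> {} \<and> (\<forall>(t, p)\<in>D. p \<in> M t)
     \<and> (\<forall>t \<in> fst ` D. \<forall>t'. t < t' \<and> (\<forall>s\<in>fst ` D. t < s \<longrightarrow> t' \<le> s) \<and> (\<exists>s\<in>fst ` D. t < s)
            \<longrightarrow> (\<forall>q\<in>M t'. commute (eprod {e\<in>D. fst e \<le> t}) q))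
     \<and> eprod D = pid"

definition det_weight :: "event set \<Rightarrow> nat" where
  "det_weight D = (\<Sum>e\<in>D. pweight (snd e))"

definition symd_family :: "event set set \<Rightarrow> event set" where
  "symd_family F = {e. odd (card {D\<in>F. e \<in> D})}"

end

theory Submission
  imports Defs
begin

text \<open>
  In a round playing the coloring C we measure every XX check whose neighbouring boxes in its
  plaquette column are red and every ZZ check whose neighbouring boxes in its plaquette row are
  blue; since no box is both, these checks commute. The stabilizer groups after the rounds
  t, t + R, t + 2R, ... increase, so they become periodic.

  A fully red column puts its bottom XX check, and then via the measured XX checks of the column
  every dressed X operator of the column, into the stabilizer group. A move of the game paints a
  red strip through a box that was red before; the dressed operator of that box commutes with
  everything measured next and survives, and the measured XX checks along the strip pass
  membership on to the new red boxes. Blue boxes follow from the duality that reflects the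
  lattice in its diagonal and exchanges X and Z.

  For detectors, the XX measurements of a detector in one column form a detector on their own:
  at every blue box the ZZ checks force the X-parities of the two rows bounding it to agree, an
  invariant that moves of the game preserve in the same way. Cutting such a column detector at
  rounds where the column is fully red, where the open parities can be closed by measured XX
  checks, leaves pieces spanning at most R + 1 rounds, hence of weight at most 2(R + 1)d; the ZZ
  measurements are handled by duality.
\<close>

section \<open>Pauli operators\<close>

lemma symd_iff [simp]: "x \<in> symd A B \<longleftrightarrow> (x \<in> A) \<noteq> (x \<in> B)"
  by (auto simp: symd_def)

lemma finite_symd: "finite A \<Longrightarrow> finite B \<Longrightarrow> finite (symd A B)"
  by (simp add: symd_def)

lemma symd_symd_cancel [simp]: "symd A (symd A B) = B"
  by auto

lemma odd_card_symd:
  assumes "finite A" "finite B"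
  shows "odd (card (symd A B)) \<longleftrightarrow> odd (card A) \<noteq> odd (card B)"
proof -
  have "symd A B \<union> (A \<inter> B) = A \<union> B" "symd A B \<inter> (A \<inter> B) = {}" by auto
  then have "card A + card B = card (symd A B) + 2 * card (A \<inter> B)"
    using card_Un_Int[OF assms] card_Un_disjoint[of "symd A B" "A \<inter> B"] assms
    by (simp add: finite_symd)
  then show ?thesis by presburger
qed

lemma pmul_assoc: "pmul (pmul p q) r = pmul p (pmul q r)"
  by (auto simp: pmul_def prod_eq_iff)

lemma pmul_pid [simp]: "pmul pid p = p" "pmul p pid = p"
  by (auto simp: pmul_def pid_def prod_eq_iff)

lemma pmul_self [simp]: "pmul p p = pid"
  by (auto simp: pmul_def pid_def prod_eq_iff)

lemma pmul_cancel_left [simp]: "pmul p (pmul p q) = q"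
  by (simp flip: pmul_assoc)

lemma pgen_pmul: "p \<in> pgen M \<Longrightarrow> q \<in> pgen M \<Longrightarrow> pmul p q \<in> pgen M"
  by (induction p rule: pgen.induct) (simp_all add: pmul_assoc pgen.pgen_mul)

lemma pgen_generator: "p \<in> M \<Longrightarrow> p \<in> pgen M"
  using pgen.pgen_mul[OF _ pgen.pgen_id, of p M] by simp

lemma pgen_least:
  assumes "pid \<in> U" "\<And>p q. p \<in> U \<Longrightarrow> q \<in> U \<Longrightarrow> pmul p q \<in> U" "M \<subseteq> U"
  shows "pgen M \<subseteq> U"
proof
  fix p assume "p \<in> pgen M"
  then show "p \<in> U" by (induction p rule: pgen.induct) (use assms in auto)
qed

lemma pgen_mono: "M \<subseteq> N \<Longrightarrow> pgen M \<subseteq> pgen N"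
  by (intro pgen_least pgen.pgen_id pgen_pmul) (auto intro: pgen_generator)

lemma pmul_in_pgen_iff: "p \<in> pgen M \<Longrightarrow> pmul p q \<in> pgen M \<longleftrightarrow> q \<in> pgen M"
  by (metis pgen_pmul pmul_cancel_left)

lemma commute_sym: "commute p q \<longleftrightarrow> commute q p"
  by (simp add: commute_def Int_commute add.commute)

lemma commute_XX: "snd p = {} \<Longrightarrow> commute p (XX k c)"
  by (simp add: commute_def XX_def)

lemma even_card_Int_doubleton:
  "a \<noteq> b \<Longrightarrow> even (card (A \<inter> {a, b})) \<longleftrightarrow> (a \<in> A \<longleftrightarrow> b \<in> A)"
  by (cases "a \<in> A"; cases "b \<in> A") (simp_all add: Int_insert_right)

lemma commute_ZZ_iff: "commute p (ZZ r j) \<longleftrightarrow> ((r, j) \<in> fst p \<longleftrightarrow> (Suc r, j) \<in> fst p)"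
  by (simp add: commute_def ZZ_def even_card_Int_doubleton)

lemma fst_XX_iff: "(i, j) \<in> fst (XX k c) \<longleftrightarrow> i = k \<and> (j = c \<or> j = Suc c)"
  by (auto simp: XX_def)

lemma XX_eq_iff [simp]: "XX k c = XX k' c' \<longleftrightarrow> k = k' \<and> c = c'"
  by (auto simp: XX_def doubleton_eq_iff)

lemma ZZ_eq_iff [simp]: "ZZ r j = ZZ r' j' \<longleftrightarrow> r = r' \<and> j = j'"
  by (auto simp: ZZ_def doubleton_eq_iff)

lemma XX_neq_ZZ [simp]: "XX k c \<noteq> ZZ r j" "ZZ r j \<noteq> XX k c"
  by (auto simp: XX_def ZZ_def)

lemma snd_XX [simp]: "snd (XX k c) = {}"
  by (simp add: XX_def)

lemma fst_ZZ [simp]: "fst (ZZ r j) = {}"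
  by (simp add: ZZ_def)

lemma pweight_XX: "pweight (XX k c) = 2"
  by (simp add: pweight_def XX_def)

definition dual_pauli :: "pauli \<Rightarrow> pauli" where
  "dual_pauli p = (prod.swap ` snd p, prod.swap ` fst p)"

lemma dual_pauli_dual_pauli [simp]: "dual_pauli (dual_pauli p) = p"
  by (simp add: dual_pauli_def image_image)

lemma dual_pauli_XX [simp]: "dual_pauli (XX i j) = ZZ j i"
  by (auto simp: dual_pauli_def XX_def ZZ_def)

lemma dual_pauli_ZZ [simp]: "dual_pauli (ZZ i j) = XX j i"
  by (auto simp: dual_pauli_def XX_def ZZ_def)

lemma dual_pauli_eq_XX_iff: "dual_pauli p = XX k c \<longleftrightarrow> p = ZZ c k"
  by (metis dual_pauli_dual_pauli dual_pauli_ZZ)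

lemma dual_pauli_pid [simp]: "dual_pauli pid = pid"
  by (simp add: dual_pauli_def pid_def)

lemma dual_pauli_pmul: "dual_pauli (pmul p q) = pmul (dual_pauli p) (dual_pauli q)"
  by (auto simp: dual_pauli_def pmul_def)

lemma commute_dual_pauli [simp]: "commute (dual_pauli p) (dual_pauli q) \<longleftrightarrow> commute p q"
proof -
  have "prod.swap ` A \<inter> prod.swap ` B = prod.swap ` (A \<inter> B)" for A B :: "qubit set"
    by auto
  then show ?thesis
    by (simp add: commute_def dual_pauli_def card_image add.commute Int_commute)
qed

lemma pweight_dual_pauli: "pweight (dual_pauli p) = pweight p"
proof -
  have "prod.swap ` snd p \<union> prod.swap ` fst p = prod.swap ` (fst p \<union> snd p)" by auto
  then show ?thesis by (simp add: pweight_def dual_pauli_def card_image)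
qed

lemma Zbar_dual_Xbar: "Zbar d (r, c) = dual_pauli (Xbar d (c, r))"
  by (auto simp: Zbar_def Xbar_def dual_pauli_def)

lemma pgen_dual_subset: "pgen (dual_pauli ` M) \<subseteq> dual_pauli ` pgen M"
proof
  fix p assume "p \<in> pgen (dual_pauli ` M)"
  then show "p \<in> dual_pauli ` pgen M"
  proof (induction p rule: pgen.induct)
    case pgen_id
    show ?case using pgen.pgen_id dual_pauli_pid by (metis image_eqI)
  next
    case (pgen_mul p q)
    then show ?case by (auto simp flip: dual_pauli_pmul intro: pgen.pgen_mul)
  qed
qed

lemma pgen_dual: "pgen (dual_pauli ` M) = dual_pauli ` pgen M"
proof
  have "pgen M \<subseteq> dual_pauli ` pgen (dual_pauli ` M)"
    using pgen_dual_subset[of "dual_pauli ` M"] by (simp add: image_image)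
  then show "dual_pauli ` pgen M \<subseteq> pgen (dual_pauli ` M)"
    by (auto simp: image_image)
qed (rule pgen_dual_subset)

section \<open>The board game\<close>

lemma solution_follows:
  assumes "solution d R C"
  shows "follows d (C (t mod R)) (C (Suc t mod R))"
proof -
  have "0 < R" using assms by (simp add: solution_def)
  then consider "t mod R = R - 1" | "Suc (t mod R) < R"
    using mod_less_divisor[of R t] by linarith
  then show ?thesis using assms by cases (simp_all add: mod_Suc solution_def)
qed

definition dual_coloring :: "coloring \<Rightarrow> coloring" where
  "dual_coloring C b \<longleftrightarrow> \<not> C (prod.swap b)"

lemma red_strip_dual: "blue_strip d C S \<Longrightarrow> red_strip d (dual_coloring C) (prod.swap ` S)"
  unfolding red_strip_def blue_strip_def dual_coloring_def
  by (elim exE conjE, intro exI conjI) (auto 4 0)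

lemma blue_strip_dual: "red_strip d C S \<Longrightarrow> blue_strip d (dual_coloring C) (prod.swap ` S)"
  unfolding red_strip_def blue_strip_def dual_coloring_def
  by (elim exE conjE, intro exI conjI) (auto 4 0)

lemma follows_dual:
  assumes "follows d C C'"
  shows "follows d (dual_coloring C) (dual_coloring C')"
proof -
  obtain Rs Bs where rs: "\<forall>S\<in>Rs. red_strip d C S" and bs: "\<forall>S\<in>Bs. blue_strip d C S"
    and disj: "\<Union>Rs \<inter> \<Union>Bs = {}"
    and upd: "\<forall>b\<in>boxes d. C' b = (if b \<in> \<Union>Rs then True else if b \<in> \<Union>Bs then False else C b)"
    using assms unfolding follows_def by blast
  define Rs' where "Rs' = (\<lambda>S. prod.swap ` S) ` Bs"
  define Bs' where "Bs' = (\<lambda>S. prod.swap ` S) ` Rs"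
  have Rs': "b \<in> \<Union>Rs' \<longleftrightarrow> prod.swap b \<in> \<Union>Bs" for b
    unfolding Rs'_def by (cases b) force
  have Bs': "b \<in> \<Union>Bs' \<longleftrightarrow> prod.swap b \<in> \<Union>Rs" for b
    unfolding Bs'_def by (cases b) force
  have "dual_coloring C' b =
      (if b \<in> \<Union>Rs' then True else if b \<in> \<Union>Bs' then False else dual_coloring C b)"
    if "b \<in> boxes d" for b
  proof -
    have "prod.swap b \<in> boxes d" using that by (cases b) (auto simp: boxes_def)
    then show ?thesis using upd disj unfolding dual_coloring_def Rs' Bs' by auto
  qed
  moreover have "\<forall>S\<in>Rs'. red_strip d (dual_coloring C) S"
    unfolding Rs'_def using bs red_strip_dual by blast
  moreover have "\<forall>S\<in>Bs'. blue_strip d (dual_coloring C) S"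
    unfolding Bs'_def using rs blue_strip_dual by blast
  moreover have "\<Union>Rs' \<inter> \<Union>Bs' = {}" using disj Rs' Bs' by blast
  ultimately show ?thesis unfolding follows_def by blast
qed

lemma solution_dual:
  assumes "solution d R C"
  shows "solution d R (\<lambda>j. dual_coloring (C j))"
  using assms unfolding solution_def dual_coloring_def
  by (simp add: follows_dual[unfolded dual_coloring_def])

lemma follows_red_strip:
  assumes "follows d C C'" "r < d - 1" "c < d - 1" "C' (r, c)"
  obtains lo hi r0 where "lo \<le> r" "r \<le> hi" "lo \<le> r0" "r0 \<le> hi" "hi < d - 1" "C (r0, c)"
    "\<And>k. lo \<le> k \<Longrightarrow> k \<le> hi \<Longrightarrow> C' (k, c)"
proof (cases "C (r, c)")
  case True
  moreover have "C' (k, c)" if "r \<le> k" "k \<le> r" for k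
    using that assms(4) le_antisym by blast
  ultimately show ?thesis using that[of r r r] assms(2) by blast
next
  case False
  obtain Rs Bs where rs: "\<forall>S\<in>Rs. red_strip d C S"
    and upd: "\<forall>b\<in>boxes d. C' b = (if b \<in> \<Union>Rs then True else if b \<in> \<Union>Bs then False else C b)"
    using assms(1) unfolding follows_def by blast
  have "(r, c) \<in> boxes d" using assms(2,3) by (simp add: boxes_def)
  then have "C' (r, c) = (if (r, c) \<in> \<Union>Rs then True else if (r, c) \<in> \<Union>Bs then False else C (r, c))"
    using upd by blast
  then have "(r, c) \<in> \<Union>Rs" using assms(4) False by (simp split: if_splits)
  then obtain S where "S \<in> Rs" "(r, c) \<in> S" by blast
  with rs have "red_strip d C S" by blast
  then obtain c' lo hi r0 where strip: "lo \<le> r0" "r0 \<le> hi" "hi < d - 1" "C (r0, c')"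
    "S = {(k, c') | k. lo \<le> k \<and> k \<le> hi}"
    unfolding red_strip_def by blast
  with \<open>(r, c) \<in> S\<close> have "c' = c" "lo \<le> r" "r \<le> hi" by auto
  have "C' (k, c)" if "lo \<le> k" "k \<le> hi" for k
  proof -
    have "(k, c) \<in> \<Union>Rs" using \<open>S \<in> Rs\<close> strip(5) \<open>c' = c\<close> that by blast
    moreover have "(k, c) \<in> boxes d" using strip(3) that assms(3) by (simp add: boxes_def)
    ultimately show ?thesis using upd by simp
  qed
  then show ?thesis using that strip \<open>c' = c\<close> \<open>lo \<le> r\<close> \<open>r \<le> hi\<close> by blast
qed

lemma follows_blue_strip:
  assumes "follows d C C'" "r < d - 1" "c < d - 1" "\<not> C' (r, c)"
  obtains lo hi c0 where "lo \<le> c" "c \<le> hi" "lo \<le> c0" "c0 \<le> hi" "hi < d - 1" "\<not> C (r, c0)"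
    "\<And>k. lo \<le> k \<Longrightarrow> k \<le> hi \<Longrightarrow> \<not> C' (r, k)"
proof -
  have "dual_coloring C' (c, r)" using assms(4) by (simp add: dual_coloring_def)
  then obtain lo hi c0 where "lo \<le> c" "c \<le> hi" "lo \<le> c0" "c0 \<le> hi" "hi < d - 1"
    "dual_coloring C (c0, r)" "\<And>k. lo \<le> k \<Longrightarrow> k \<le> hi \<Longrightarrow> dual_coloring C' (k, r)"
    by (rule follows_red_strip[OF follows_dual[OF assms(1)] assms(3,2)]) blast
  then show thesis using that[of lo hi c0] by (simp add: dual_coloring_def)
qed

section \<open>The measurement schedule\<close>

definition coloring_schedule :: "nat \<Rightarrow> nat \<Rightarrow> (nat \<Rightarrow> coloring) \<Rightarrow> nat \<Rightarrow> pauli set" where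
  "coloring_schedule d R C t =
     {XX k c | k c. k < d \<and> c < d - 1
        \<and> (0 < k \<longrightarrow> C (t mod R) (k - 1, c)) \<and> (k < d - 1 \<longrightarrow> C (t mod R) (k, c))}
   \<union> {ZZ r j | r j. r < d - 1 \<and> j < d
        \<and> (0 < j \<longrightarrow> \<not> C (t mod R) (r, j - 1)) \<and> (j < d - 1 \<longrightarrow> \<not> C (t mod R) (r, j))}"

lemma XX_in_coloring_schedule:
  "XX k c \<in> coloring_schedule d R C t \<longleftrightarrow> k < d \<and> c < d - 1
     \<and> (0 < k \<longrightarrow> C (t mod R) (k - 1, c)) \<and> (k < d - 1 \<longrightarrow> C (t mod R) (k, c))"
  unfolding coloring_schedule_def by auto

lemma ZZ_in_coloring_schedule:
  "ZZ r j \<in> coloring_schedule d R C t \<longleftrightarrow> r < d - 1 \<and> j < d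
     \<and> (0 < j \<longrightarrow> \<not> C (t mod R) (r, j - 1)) \<and> (j < d - 1 \<longrightarrow> \<not> C (t mod R) (r, j))"
  unfolding coloring_schedule_def by auto

lemma coloring_schedule_cases:
  assumes "q \<in> coloring_schedule d R C t"
  obtains k c where "q = XX k c" "XX k c \<in> coloring_schedule d R C t"
    | r j where "q = ZZ r j" "ZZ r j \<in> coloring_schedule d R C t"
proof -
  have "(\<exists>k c. q = XX k c) \<or> (\<exists>r j. q = ZZ r j)"
    using assms unfolding coloring_schedule_def by blast
  then show thesis using assms that by blast
qed

lemma coloring_schedule_commute:
  assumes "p \<in> coloring_schedule d R C t" "q \<in> coloring_schedule d R C t"
  shows "commute p q"
proof -
  have XZ: "commute (XX k c) (ZZ r j)"
    if "XX k c \<in> coloring_schedule d R C t" "ZZ r j \<in> coloring_schedule d R C t" for k c r j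
  proof -
    have "\<not> (r = k \<and> (j = c \<or> j = Suc c))" "\<not> (Suc r = k \<and> (j = c \<or> j = Suc c))"
      using that by (auto simp: XX_in_coloring_schedule ZZ_in_coloring_schedule)
    then show ?thesis unfolding commute_ZZ_iff fst_XX_iff by blast
  qed
  from assms(1,2) show ?thesis
  proof (cases rule: coloring_schedule_cases[OF assms(1)];
         cases rule: coloring_schedule_cases[OF assms(2)])
    fix k c r j
    assume "p = ZZ r j" "ZZ r j \<in> coloring_schedule d R C t"
      and "q = XX k c" "XX k c \<in> coloring_schedule d R C t"
    then show ?thesis using XZ commute_sym by blast
  qed (simp_all add: commute_XX commute_ZZ_iff[of "ZZ _ _"] XZ)
qed

lemma coloring_schedule_subset_bs_checks: "coloring_schedule d R C t \<subseteq> bs_checks d"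
  unfolding coloring_schedule_def bs_checks_def by auto

lemma schedule_coloring_schedule: "schedule d R (coloring_schedule d R C)"
  unfolding schedule_def
proof (intro allI conjI ballI)
  fix t
  show "coloring_schedule d R C t \<subseteq> bs_checks d"
    by (rule coloring_schedule_subset_bs_checks)
  show "commute p q" if "p \<in> coloring_schedule d R C t" "q \<in> coloring_schedule d R C t" for p q
    using that by (rule coloring_schedule_commute)
  show "coloring_schedule d R C (t + R) = coloring_schedule d R C t"
    unfolding coloring_schedule_def by simp
qed

lemma coloring_schedule_dual:
  "coloring_schedule d R (\<lambda>j. dual_coloring (C j)) = (\<lambda>t. dual_pauli ` coloring_schedule d R C t)"
proof (rule ext, intro set_eqI iffI)
  fix t q assume "q \<in> coloring_schedule d R (\<lambda>j. dual_coloring (C j)) t"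
  then show "q \<in> dual_pauli ` coloring_schedule d R C t"
  proof (cases rule: coloring_schedule_cases)
    case (1 k c)
    then have "ZZ c k \<in> coloring_schedule d R C t"
      by (simp add: XX_in_coloring_schedule ZZ_in_coloring_schedule dual_coloring_def)
    then show ?thesis using 1 by (metis image_eqI dual_pauli_ZZ)
  next
    case (2 r j)
    then have "XX j r \<in> coloring_schedule d R C t"
      by (simp add: XX_in_coloring_schedule ZZ_in_coloring_schedule dual_coloring_def)
    then show ?thesis using 2 by (metis image_eqI dual_pauli_XX)
  qed
next
  fix t q assume "q \<in> dual_pauli ` coloring_schedule d R C t"
  then obtain p where p: "q = dual_pauli p" "p \<in> coloring_schedule d R C t" by blast
  from p(2) show "q \<in> coloring_schedule d R (\<lambda>j. dual_coloring (C j)) t"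
    by (cases rule: coloring_schedule_cases)
      (use p in \<open>simp_all add: XX_in_coloring_schedule ZZ_in_coloring_schedule dual_coloring_def\<close>)
qed

section \<open>Instantaneous stabilizer groups\<close>

lemma measured_in_isg: "q \<in> M t \<Longrightarrow> q \<in> isg M (Suc t)"
  by (auto simp: meas_update_def intro: pgen_generator)

lemma isg_SucI: "s \<in> isg M t \<Longrightarrow> \<forall>q\<in>M t. commute s q \<Longrightarrow> s \<in> isg M (Suc t)"
  by (auto simp: meas_update_def intro: pgen_generator)

lemma pmul_in_isg_Suc_iff:
  "p \<in> isg M (Suc t) \<Longrightarrow> pmul p q \<in> isg M (Suc t) \<longleftrightarrow> q \<in> isg M (Suc t)"
  by (simp add: meas_update_def pmul_in_pgen_iff)

lemma pid_in_isg: "pid \<in> isg M t"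
  by (cases t) (auto simp: meas_update_def intro: pgen.pgen_id)

lemma isg_dual: "isg (\<lambda>t. dual_pauli ` M t) t = dual_pauli ` isg M t"
proof (induction t)
  case (Suc t)
  have "{s \<in> dual_pauli ` S. \<forall>m\<in>dual_pauli ` Ms. commute s m} \<union> dual_pauli ` Ms
      = dual_pauli ` ({s \<in> S. \<forall>m\<in>Ms. commute s m} \<union> Ms)" for S Ms
    by auto
  then show ?case using Suc by (simp add: meas_update_def pgen_dual)
qed simp

definition lattice_paulis :: "nat \<Rightarrow> pauli set" where
  "lattice_paulis d = Pow ({..<d} \<times> {..<d}) \<times> Pow ({..<d} \<times> {..<d})"

lemma isg_lattice_paulis: "schedule d R M \<Longrightarrow> isg M t \<subseteq> lattice_paulis d"
proof (induction t)
  case 0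
  then show ?case by (simp add: lattice_paulis_def pid_def)
next
  case (Suc t)
  have "M t \<subseteq> lattice_paulis d"
    using Suc.prems unfolding schedule_def bs_checks_def lattice_paulis_def
    by (fastforce simp: XX_def ZZ_def)
  with Suc show ?case
    unfolding isg.simps meas_update_def
    by (intro pgen_least) (auto simp: lattice_paulis_def pid_def pmul_def symd_def)
qed

lemma isg_mono_period: "schedule d R M \<Longrightarrow> isg M t \<subseteq> isg M (t + R)"
proof (induction t)
  case 0
  then show ?case by (simp add: pid_in_isg)
next
  case (Suc t)
  then have "M (t + R) = M t" by (simp add: schedule_def)
  moreover have "meas_update (isg M t) (M t) \<subseteq> meas_update (isg M (t + R)) (M t)"
    unfolding meas_update_def using Suc by (intro pgen_mono) auto
  ultimately show ?case by simp
qed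

lemma isg_periodic_from:
  assumes "schedule d R M" "isg M (t0 + R) = isg M t0" "t0 \<le> t"
  shows "isg M (t + R) = isg M t"
  using assms(3)
proof (induction t rule: dec_induct)
  case (step t)
  then show ?case using assms(1) by (simp add: schedule_def)
qed (use assms(2) in simp)

lemma isg_eventually_periodic:
  assumes "schedule d R M"
  shows "\<exists>t0. \<forall>t\<ge>t0. isg M (t + R) = isg M t"
proof -
  define f where "f m = isg M (m * R)" for m
  have "f n \<subseteq> f (Suc n)" for n
    using isg_mono_period[OF assms, of "n * R"] by (simp add: f_def add.commute)
  then have "mono f" unfolding mono_iff_le_Suc by blast
  moreover have "range f \<subseteq> Pow (lattice_paulis d)"
    unfolding f_def using isg_lattice_paulis[OF assms] by blast
  then have "finite (range f)"
    by (rule finite_subset) (simp add: lattice_paulis_def)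
  moreover have "f (Suc n) = f (Suc (Suc n))" if "f n = f (Suc n)" for n
    using isg_periodic_from[OF assms, of "n * R" "R + n * R"] that by (simp add: f_def add.commute)
  ultimately obtain N where "\<forall>n\<ge>N. f N = f n"
    using finite_mono_remains_stable_implies_strict_prefix[of f] by blast
  moreover have "N \<le> Suc N" by simp
  ultimately have "f (Suc N) = f N" by metis
  then have "isg M (N * R + R) = isg M (N * R)" by (simp add: f_def add.commute)
  then show ?thesis using isg_periodic_from[OF assms] by blast
qed

section \<open>Dressed operators in the steady state\<close>

lemma iff_along_interval:
  assumes step: "\<And>k. lo \<le> k \<Longrightarrow> k < hi \<Longrightarrow> P k \<longleftrightarrow> P (Suc k)"
    and "lo \<le> i" "i \<le> hi" "lo \<le> j" "j \<le> hi"
  shows "P i \<longleftrightarrow> P j"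
proof -
  have "P i \<longleftrightarrow> P lo" if "lo \<le> i" "i \<le> hi" for i
    using that
  proof (induction i rule: dec_induct)
    case (step i)
    then show ?case using assms(1)[of i] by simp
  qed simp
  then show ?thesis using assms(2-5) by blast
qed

lemma Xbar_pmul_XX: "Suc r < d \<Longrightarrow> Xbar d (r, c) = pmul (XX (Suc r) c) (Xbar d (Suc r, c))"
  by (auto simp: Xbar_def XX_def pmul_def prod_eq_iff)

lemma Xbar_bottom: "2 \<le> d \<Longrightarrow> Xbar d (d - 2, c) = XX (d - 1) c"
  by (auto simp: Xbar_def XX_def prod_eq_iff)

lemma snd_Xbar [simp]: "snd (Xbar d b) = {}"
  by (simp add: Xbar_def)

lemma fst_Xbar_iff: "(i, j) \<in> fst (Xbar d (r, c)) \<longleftrightarrow> (j = c \<or> j = Suc c) \<and> r < i \<and> i < d"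
  by (auto simp: Xbar_def)

text \<open>The only checks anticommuting with the dressed operator of the box (r, c) are the ZZ
  checks across the top edge of its support; they are not measured while the box is red.\<close>

lemma Xbar_commute_coloring_schedule:
  assumes "C (t mod R) (r, c)" "r < d - 1" "c < d - 1" "q \<in> coloring_schedule d R C t"
  shows "commute (Xbar d (r, c)) q"
  using assms(4)
proof (cases rule: coloring_schedule_cases)
  case (1 k c')
  then show ?thesis by (simp add: commute_XX)
next
  case (2 r' j)
  then have "r' < d - 1" "\<not> (r' = r \<and> (j = c \<or> j = Suc c))"
    using assms(1-3) by (auto simp: ZZ_in_coloring_schedule)
  then show ?thesis using 2 by (auto simp: commute_ZZ_iff fst_Xbar_iff)
qed

lemma Xbar_in_isg_iff_along_red_run:
  assumes "c < d - 1" "hi < d - 1" "\<And>k. lo \<le> k \<Longrightarrow> k \<le> hi \<Longrightarrow> C (t mod R) (k, c)"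
    "lo \<le> i" "i \<le> hi" "lo \<le> j" "j \<le> hi"
  shows "Xbar d (i, c) \<in> isg (coloring_schedule d R C) (Suc t)
     \<longleftrightarrow> Xbar d (j, c) \<in> isg (coloring_schedule d R C) (Suc t)"
proof (rule iff_along_interval[of lo hi])
  fix k assume k: "lo \<le> k" "k < hi"
  then have "XX (Suc k) c \<in> coloring_schedule d R C t"
    using assms(1-3) by (simp add: XX_in_coloring_schedule)
  moreover have "Xbar d (k, c) = pmul (XX (Suc k) c) (Xbar d (Suc k, c))"
    using k assms(2) by (intro Xbar_pmul_XX) simp
  ultimately show "Xbar d (k, c) \<in> isg (coloring_schedule d R C) (Suc t)
      \<longleftrightarrow> Xbar d (Suc k, c) \<in> isg (coloring_schedule d R C) (Suc t)"
    by (metis pmul_in_isg_Suc_iff measured_in_isg)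
qed (use assms in auto)

definition red_Xbars_in_isg :: "nat \<Rightarrow> nat \<Rightarrow> (nat \<Rightarrow> coloring) \<Rightarrow> nat \<Rightarrow> nat \<Rightarrow> bool" where
  "red_Xbars_in_isg d R C t c \<longleftrightarrow>
     (\<forall>r<d - 1. C (t mod R) (r, c) \<longrightarrow> Xbar d (r, c) \<in> isg (coloring_schedule d R C) (Suc t))"

lemma red_Xbars_in_isg_red_column:
  assumes "2 \<le> d" "c < d - 1" "\<forall>r<d - 1. C (t mod R) (r, c)"
  shows "red_Xbars_in_isg d R C t c"
  unfolding red_Xbars_in_isg_def
proof (intro allI impI)
  fix r assume r: "r < d - 1"
  have "XX (d - 1) c \<in> coloring_schedule d R C t"
    using assms by (simp add: XX_in_coloring_schedule)
  then have "Xbar d (d - 2, c) \<in> isg (coloring_schedule d R C) (Suc t)"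
    using Xbar_bottom[OF assms(1)] measured_in_isg by metis
  moreover have "Xbar d (r, c) \<in> isg (coloring_schedule d R C) (Suc t)
      \<longleftrightarrow> Xbar d (d - 2, c) \<in> isg (coloring_schedule d R C) (Suc t)"
    by (rule Xbar_in_isg_iff_along_red_run[where lo = 0 and hi = "d - 2"]) (use assms r in auto)
  ultimately show "Xbar d (r, c) \<in> isg (coloring_schedule d R C) (Suc t)" by simp
qed

lemma red_Xbars_in_isg_Suc:
  assumes "solution d R C" "c < d - 1" "red_Xbars_in_isg d R C t c"
  shows "red_Xbars_in_isg d R C (Suc t) c"
  unfolding red_Xbars_in_isg_def
proof (intro allI impI)
  fix r assume r: "r < d - 1" "C (Suc t mod R) (r, c)"
  obtain lo hi r0 where strip: "lo \<le> r" "r \<le> hi" "lo \<le> r0" "r0 \<le> hi" "hi < d - 1"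
    "C (t mod R) (r0, c)" "\<And>k. lo \<le> k \<Longrightarrow> k \<le> hi \<Longrightarrow> C (Suc t mod R) (k, c)"
    using follows_red_strip[OF solution_follows[OF assms(1)] r(1) assms(2) r(2)] by blast
  have "Xbar d (r0, c) \<in> isg (coloring_schedule d R C) (Suc t)"
    using assms(3) strip unfolding red_Xbars_in_isg_def by simp
  moreover have "\<forall>q\<in>coloring_schedule d R C (Suc t). commute (Xbar d (r0, c)) q"
    using Xbar_commute_coloring_schedule[of C "Suc t" R r0 c d] strip assms(2) by auto
  ultimately have "Xbar d (r0, c) \<in> isg (coloring_schedule d R C) (Suc (Suc t))"
    by (rule isg_SucI)
  moreover have "Xbar d (r, c) \<in> isg (coloring_schedule d R C) (Suc (Suc t))
      \<longleftrightarrow> Xbar d (r0, c) \<in> isg (coloring_schedule d R C) (Suc (Suc t))"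
    by (rule Xbar_in_isg_iff_along_red_run[where lo = lo and hi = hi]) (use assms(2) strip in auto)
  ultimately show "Xbar d (r, c) \<in> isg (coloring_schedule d R C) (Suc (Suc t))" by simp
qed

lemma red_Xbars_in_isg_after_period:
  assumes "solution d R C" "2 \<le> d" "c < d - 1" "R \<le> t"
  shows "red_Xbars_in_isg d R C t c"
proof -
  obtain j where j: "j < R" "\<forall>r<d - 1. C j (r, c)"
    using assms(1,3) unfolding solution_def by blast
  have "red_Xbars_in_isg d R C (j + n) c" for n
  proof (induction n)
    case 0
    then show ?case using red_Xbars_in_isg_red_column[OF assms(2,3)] j by simp
  next
    case (Suc n)
    then show ?case using red_Xbars_in_isg_Suc[OF assms(1,3)] by simp
  qed
  moreover have "t = j + (t - j)" using j assms(4) by simp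
  ultimately show ?thesis by metis
qed

lemma coloring_schedule_steady_state:
  assumes "2 \<le> d" "solution d R C" "R \<le> t" "b \<in> boxes d"
  shows "C (t mod R) b \<Longrightarrow> Xbar d b \<in> isg (coloring_schedule d R C) (Suc t)"
    and "\<not> C (t mod R) b \<Longrightarrow> Zbar d b \<in> isg (coloring_schedule d R C) (Suc t)"
proof -
  obtain r c where b: "b = (r, c)" "r < d - 1" "c < d - 1"
    using assms(4) by (auto simp: boxes_def)
  show "Xbar d b \<in> isg (coloring_schedule d R C) (Suc t)" if "C (t mod R) b"
    using red_Xbars_in_isg_after_period[OF assms(2,1) b(3) assms(3)] b that
    unfolding red_Xbars_in_isg_def by simp
  show "Zbar d b \<in> isg (coloring_schedule d R C) (Suc t)" if "\<not> C (t mod R) b"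
  proof -
    have "Xbar d (c, r) \<in> isg (coloring_schedule d R (\<lambda>j. dual_coloring (C j))) (Suc t)"
      using red_Xbars_in_isg_after_period[OF solution_dual[OF assms(2)] assms(1) b(2) assms(3)] b that
      unfolding red_Xbars_in_isg_def by (simp add: dual_coloring_def)
    then have "Xbar d (c, r) \<in> dual_pauli ` isg (coloring_schedule d R C) (Suc t)"
      unfolding coloring_schedule_dual isg_dual .
    then show ?thesis
      using b by (auto simp: Zbar_dual_Xbar)
  qed
qed

section \<open>Detectors\<close>

lemma detector_finite: "detector M D \<Longrightarrow> finite D"
  by (simp add: detector_def)

lemma detector_measured: "detector M D \<Longrightarrow> (t, p) \<in> D \<Longrightarrow> p \<in> M t"
  by (auto simp: detector_def)

lemma detector_prefix_commute:
  assumes det: "detector M D" and "\<exists>s\<in>fst ` D. s < u" "\<exists>s\<in>fst ` D. u \<le> s" "q \<in> M u"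
  shows "commute (eprod {e \<in> D. fst e < u}) q"
proof -
  define T where "T = {s \<in> fst ` D. s < u}"
  have "finite T" "T \<noteq> {}"
    using detector_finite[OF det] assms(2) by (auto simp: T_def)
  define t where "t = Max T"
  have t: "t \<in> fst ` D" "t < u" "\<And>s. s \<in> fst ` D \<Longrightarrow> s < u \<Longrightarrow> s \<le> t"
    using Max_in[OF \<open>finite T\<close> \<open>T \<noteq> {}\<close>] Max_ge[OF \<open>finite T\<close>] by (auto simp: t_def T_def)
  have "\<forall>s\<in>fst ` D. t < s \<longrightarrow> u \<le> s"
  proof (intro ballI impI)
    fix s assume "s \<in> fst ` D" "t < s"
    then show "u \<le> s" using t(3)[of s] by (cases "s < u") auto
  qed
  moreover have "\<exists>s\<in>fst ` D. t < s"
    using assms(3) t(2) less_le_trans by blast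
  ultimately have "commute (eprod {e \<in> D. fst e \<le> t}) q"
    using det t(1,2) assms(4) unfolding detector_def by blast
  moreover have "{e \<in> D. fst e \<le> t} = {e \<in> D. fst e < u}"
    using t by force
  ultimately show ?thesis by simp
qed

lemma detectorI_prefix:
  assumes "finite D" "D \<noteq> {}" "\<forall>(t, p)\<in>D. p \<in> M t" "eprod D = pid"
    and prefix: "\<And>u q. \<exists>s\<in>fst ` D. s < u \<Longrightarrow> \<exists>s\<in>fst ` D. u \<le> s \<Longrightarrow> q \<in> M u \<Longrightarrow>
      commute (eprod {e \<in> D. fst e < u}) q"
  shows "detector M D"
  unfolding detector_def
proof (intro conjI assms ballI allI impI)
  fix t t' q
  assume t: "t \<in> fst ` D" and t': "t < t' \<and> (\<forall>s\<in>fst ` D. t < s \<longrightarrow> t' \<le> s) \<and> (\<exists>s\<in>fst ` D. t < s)"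
    and q: "q \<in> M t'"
  have "{e \<in> D. fst e \<le> t} = {e \<in> D. fst e < t'}"
    using t' by force
  moreover have "\<exists>s\<in>fst ` D. s < t'" "\<exists>s\<in>fst ` D. t' \<le> s"
    using t t' by force+
  ultimately show "commute (eprod {e \<in> D. fst e \<le> t}) q"
    using prefix q by simp
qed

definition light_detector_sum :: "(nat \<Rightarrow> pauli set) \<Rightarrow> nat \<Rightarrow> event set \<Rightarrow> bool" where
  "light_detector_sum M w E \<longleftrightarrow>
     (\<exists>F. finite F \<and> (\<forall>D\<in>F. detector M D \<and> det_weight D \<le> w) \<and> E = symd_family F)"

lemma symd_family_symd:
  assumes "finite F" "finite G"
  shows "symd_family (symd F G) = symd (symd_family F) (symd_family G)"
proof (rule set_eqI)
  fix e
  have "{D \<in> symd F G. e \<in> D} = symd {D \<in> F. e \<in> D} {D \<in> G. e \<in> D}" by auto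
  then show "e \<in> symd_family (symd F G) \<longleftrightarrow> e \<in> symd (symd_family F) (symd_family G)"
    using odd_card_symd[of "{D \<in> F. e \<in> D}" "{D \<in> G. e \<in> D}"] assms
    by (simp add: symd_family_def)
qed

lemma light_detector_sum_empty: "light_detector_sum M w {}"
  unfolding light_detector_sum_def symd_family_def by (rule exI[of _ "{}"]) simp

lemma light_detector_sum_detector:
  assumes "detector M D" "det_weight D \<le> w"
  shows "light_detector_sum M w D"
proof -
  have "{D' \<in> {D}. e \<in> D'} = (if e \<in> D then {D} else {})" for e by auto
  then have "D = symd_family {D}" by (auto simp: symd_family_def)
  then show ?thesis using assms unfolding light_detector_sum_def by blast
qed

lemma light_detector_sum_symd:
  assumes "light_detector_sum M w A" "light_detector_sum M w B"
  shows "light_detector_sum M w (symd A B)"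
proof -
  obtain F G where "finite F" "\<forall>D\<in>F. detector M D \<and> det_weight D \<le> w" "A = symd_family F"
    and "finite G" "\<forall>D\<in>G. detector M D \<and> det_weight D \<le> w" "B = symd_family G"
    using assms unfolding light_detector_sum_def by blast
  then show ?thesis unfolding light_detector_sum_def
    by (intro exI[of _ "symd F G"]) (auto simp: finite_symd symd_family_symd)
qed

definition dual_event :: "event \<Rightarrow> event" where
  "dual_event e = (fst e, dual_pauli (snd e))"

lemma dual_event_dual_event [simp]: "dual_event (dual_event e) = e"
  by (simp add: dual_event_def)

lemma inj_dual_event: "inj dual_event"
  by (metis injI dual_event_dual_event)

lemma fst_dual_event [simp]: "fst (dual_event e) = fst e"
  by (simp add: dual_event_def)

lemma snd_dual_event: "snd (dual_event e) = dual_pauli (snd e)"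
  by (simp add: dual_event_def)

lemma mem_dual_event_image_iff: "e \<in> dual_event ` D \<longleftrightarrow> dual_event e \<in> D"
  by (metis dual_event_dual_event image_iff)

lemma eprod_dual_event: "eprod (dual_event ` E) = dual_pauli (eprod E)"
proof -
  have "card {e \<in> dual_event ` E. q \<in> fst (snd e)} = card {e \<in> E. prod.swap q \<in> snd (snd e)}"
    "card {e \<in> dual_event ` E. q \<in> snd (snd e)} = card {e \<in> E. prod.swap q \<in> fst (snd e)}" for q
  proof -
    have "{e \<in> dual_event ` E. q \<in> fst (snd e)} = dual_event ` {e \<in> E. prod.swap q \<in> snd (snd e)}"
      "{e \<in> dual_event ` E. q \<in> snd (snd e)} = dual_event ` {e \<in> E. prod.swap q \<in> fst (snd e)}"
      by (force simp: dual_event_def dual_pauli_def)+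
    then show "card {e \<in> dual_event ` E. q \<in> fst (snd e)} = card {e \<in> E. prod.swap q \<in> snd (snd e)}"
      "card {e \<in> dual_event ` E. q \<in> snd (snd e)} = card {e \<in> E. prod.swap q \<in> fst (snd e)}"
      using inj_dual_event by (simp_all add: card_image inj_on_subset)
  qed
  moreover have swap: "{q. P (prod.swap q)} = prod.swap ` {q. P q}" for P :: "qubit \<Rightarrow> bool"
    by force
  ultimately show ?thesis
    unfolding eprod_def dual_pauli_def
    by (simp add: swap[of "\<lambda>q. odd (card {e \<in> E. q \<in> fst (snd e)})"]
      swap[of "\<lambda>q. odd (card {e \<in> E. q \<in> snd (snd e)})"])
qed

lemma detector_dual:
  assumes det: "detector M D"
  shows "detector (\<lambda>t. dual_pauli ` M t) (dual_event ` D)"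
proof (rule detectorI_prefix)
  show "finite (dual_event ` D)" "dual_event ` D \<noteq> {}"
    using det by (simp_all add: detector_def)
  show "\<forall>(t, p)\<in>dual_event ` D. p \<in> dual_pauli ` M t"
    using detector_measured[OF det] by (auto simp: dual_event_def)
  show "eprod (dual_event ` D) = pid"
    using det by (simp add: detector_def eprod_dual_event)
next
  fix u q
  assume "\<exists>s\<in>fst ` dual_event ` D. s < u" "\<exists>s\<in>fst ` dual_event ` D. u \<le> s"
    and "q \<in> dual_pauli ` M u"
  moreover obtain q0 where "q = dual_pauli q0" "q0 \<in> M u"
    using \<open>q \<in> dual_pauli ` M u\<close> by blast
  ultimately have "commute (eprod {e \<in> D. fst e < u}) q0" "q = dual_pauli q0"
    using detector_prefix_commute[OF det] by (simp_all add: image_image)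
  moreover have "{e \<in> dual_event ` D. fst e < u} = dual_event ` {e \<in> D. fst e < u}"
    by auto
  ultimately show "commute (eprod {e \<in> dual_event ` D. fst e < u}) q"
    by (simp add: eprod_dual_event)
qed

lemma det_weight_dual: "det_weight (dual_event ` E) = det_weight E"
  unfolding det_weight_def
  by (rule sum.reindex_cong[OF inj_on_subset[OF inj_dual_event subset_UNIV] refl])
    (simp add: dual_event_def pweight_dual_pauli)

lemma symd_family_dual: "symd_family ((\<lambda>D. dual_event ` D) ` F) = dual_event ` symd_family F"
proof (rule set_eqI)
  fix e
  have "inj_on (\<lambda>D. dual_event ` D) X" for X
    using inj_dual_event by (simp add: inj_on_def inj_image_eq_iff)
  moreover have "{D \<in> (\<lambda>D. dual_event ` D) ` F. e \<in> D} = (\<lambda>D. dual_event ` D) ` {D \<in> F. dual_event e \<in> D}"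
    by (auto simp: image_iff) (metis dual_event_dual_event)+
  ultimately have "card {D \<in> (\<lambda>D. dual_event ` D) ` F. e \<in> D} = card {D \<in> F. dual_event e \<in> D}"
    by (simp add: card_image)
  moreover have "e \<in> dual_event ` symd_family F \<longleftrightarrow> dual_event e \<in> symd_family F"
    by (metis image_eqI imageE dual_event_dual_event)
  ultimately show "e \<in> symd_family ((\<lambda>D. dual_event ` D) ` F) \<longleftrightarrow> e \<in> dual_event ` symd_family F"
    unfolding symd_family_def by simp
qed

lemma light_detector_sum_dual:
  assumes "light_detector_sum M w E"
  shows "light_detector_sum (\<lambda>t. dual_pauli ` M t) w (dual_event ` E)"
proof -
  obtain F where "finite F" "\<forall>D\<in>F. detector M D \<and> det_weight D \<le> w" "E = symd_family F"
    using assms unfolding light_detector_sum_def by blast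
  then show ?thesis unfolding light_detector_sum_def
    by (intro exI[of _ "(\<lambda>D. dual_event ` D) ` F"])
      (auto simp: detector_dual det_weight_dual symd_family_dual)
qed

section \<open>Parities of XX measurements\<close>

definition XX_parity :: "event set \<Rightarrow> nat \<Rightarrow> nat \<Rightarrow> nat \<Rightarrow> bool" where
  "XX_parity E k c u \<longleftrightarrow> odd (card {s. s < u \<and> (s, XX k c) \<in> E})"

lemma XX_parity_0 [simp]: "\<not> XX_parity E k c 0"
  by (simp add: XX_parity_def)

lemma XX_parity_Suc: "XX_parity E k c (Suc u) \<longleftrightarrow> XX_parity E k c u \<noteq> ((u, XX k c) \<in> E)"
proof -
  have "{s. s < Suc u \<and> (s, XX k c) \<in> E} =
      (if (u, XX k c) \<in> E then insert u else id) {s. s < u \<and> (s, XX k c) \<in> E}"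
    by (auto simp: less_Suc_eq)
  then show ?thesis by (simp add: XX_parity_def)
qed

lemma XX_parity_symd: "XX_parity (symd A B) k c u \<longleftrightarrow> XX_parity A k c u \<noteq> XX_parity B k c u"
proof -
  have "{s. s < u \<and> (s, XX k c) \<in> symd A B} =
      symd {s. s < u \<and> (s, XX k c) \<in> A} {s. s < u \<and> (s, XX k c) \<in> B}"
    by auto
  then show ?thesis by (simp add: XX_parity_def odd_card_symd)
qed

lemma XX_parity_after_last:
  assumes "\<forall>e\<in>E. fst e < U" "U \<le> u"
  shows "XX_parity E k c u = XX_parity E k c U"
proof -
  have "{s. s < u \<and> (s, XX k c) \<in> E} = {s. s < U \<and> (s, XX k c) \<in> E}"
    using assms by force
  then show ?thesis by (simp add: XX_parity_def)
qed

lemma XX_parity_imp_measured: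
  assumes "XX_parity E k c u"
  obtains s where "s < u" "(s, XX k c) \<in> E"
proof -
  have "{s. s < u \<and> (s, XX k c) \<in> E} \<noteq> {}"
    using assms odd_card_imp_not_empty unfolding XX_parity_def by blast
  then show thesis using that by blast
qed

lemma card_events_of_check:
  assumes "finite E"
  shows "card {e \<in> E. fst e < u \<and> snd e = p} = card {s. s < u \<and> (s, p) \<in> E}"
proof -
  have "{s. s < u \<and> (s, p) \<in> E} = fst ` {e \<in> E. fst e < u \<and> snd e = p}"
    by force
  moreover have "inj_on fst {e \<in> E. fst e < u \<and> snd e = p}"
    by (auto simp: inj_on_def prod_eq_iff)
  ultimately show ?thesis by (simp add: card_image)
qed

text \<open>The X-part of a product of checks at a qubit (i, j) is the parity of the XX checks
  touching it, which sit in columns j and j - 1.\<close>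

lemma fst_eprod_prefix:
  assumes "finite E" "\<forall>e\<in>E. snd e \<in> bs_checks d"
  shows "(i, j) \<in> fst (eprod {e \<in> E. fst e < u}) \<longleftrightarrow>
    XX_parity E i j u \<noteq> (0 < j \<and> XX_parity E i (j - 1) u)"
proof -
  let ?A = "{e \<in> E. fst e < u \<and> snd e = XX i j}"
  let ?B = "{e \<in> E. fst e < u \<and> snd e = XX i (j - 1) \<and> 0 < j}"
  have "(i, j) \<in> fst (snd e) \<longleftrightarrow> snd e = XX i j \<or> (snd e = XX i (j - 1) \<and> 0 < j)" if "e \<in> E" for e
    using assms(2) that by (auto simp: bs_checks_def fst_XX_iff)
  then have "{e \<in> {e \<in> E. fst e < u}. (i, j) \<in> fst (snd e)} = ?A \<union> ?B"
    by auto
  moreover have "?A \<inter> ?B = {}" "finite ?A" "finite ?B"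
    using assms(1) by auto
  moreover have "card ?B = (if 0 < j then card {s. s < u \<and> (s, XX i (j - 1)) \<in> E} else 0)"
    using card_events_of_check[OF assms(1), of u "XX i (j - 1)"] by auto
  ultimately have "card {e \<in> {e \<in> E. fst e < u}. (i, j) \<in> fst (snd e)} =
      card {s. s < u \<and> (s, XX i j) \<in> E} + (if 0 < j then card {s. s < u \<and> (s, XX i (j - 1)) \<in> E} else 0)"
    using card_events_of_check[OF assms(1), of u "XX i j"] by (simp add: card_Un_disjoint)
  then show ?thesis by (auto simp: eprod_def XX_parity_def)
qed

lemma snd_eprod_XX_events:
  assumes "\<forall>e\<in>E. \<exists>k c. snd e = XX k c"
  shows "snd (eprod E) = {}"
proof -
  have empty: "{e \<in> E. q \<in> snd (snd e)} = {}" for q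
    using assms by (metis (mono_tags, lifting) empty_Collect_eq empty_iff snd_XX)
  show ?thesis unfolding eprod_def by (simp only: snd_conv empty card.empty) simp
qed

lemma detector_checks:
  assumes "detector M D" "\<And>t. M t \<subseteq> bs_checks d"
  shows "\<forall>e\<in>D. snd e \<in> bs_checks d"
proof
  fix e assume "e \<in> D"
  then have "snd e \<in> M (fst e)" using detector_measured[OF assms(1), of "fst e" "snd e"] by simp
  then show "snd e \<in> bs_checks d" using assms(2) by blast
qed

lemma detector_XX_parity_final:
  assumes det: "detector M D" and checks: "\<And>t. M t \<subseteq> bs_checks d" and "\<forall>e\<in>D. fst e < U"
  shows "\<not> XX_parity D k c U"
proof -
  have "{e \<in> D. fst e < U} = D" using assms(3) by auto
  then have "fst (eprod {e \<in> D. fst e < U}) = {}"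
    using det by (simp add: detector_def pid_def)
  then have parity: "XX_parity D i j U \<longleftrightarrow> 0 < j \<and> XX_parity D i (j - 1) U" for i j
    using fst_eprod_prefix[OF detector_finite[OF det] detector_checks[OF det checks], of i j U]
    by blast
  show ?thesis
  proof (induction c)
    case 0
    show ?case using parity[of k 0] by simp
  next
    case (Suc c)
    then show ?case using parity[of k "Suc c"] by simp
  qed
qed

lemma detector_XX_parity_ZZ:
  assumes det: "detector M D" and checks: "\<And>t. M t \<subseteq> bs_checks d"
    and "ZZ r j \<in> M u" "0 < j"
  shows "(XX_parity D r (j - 1) u \<noteq> XX_parity D (Suc r) (j - 1) u) \<longleftrightarrow>
    (XX_parity D r j u \<noteq> XX_parity D (Suc r) j u)"
proof (cases "(\<exists>s\<in>fst ` D. s < u) \<and> (\<exists>s\<in>fst ` D. u \<le> s)")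
  case True
  then have "commute (eprod {e \<in> D. fst e < u}) (ZZ r j)"
    using detector_prefix_commute[OF det _ _ assms(3)] by blast
  then show ?thesis
    using fst_eprod_prefix[OF detector_finite[OF det] detector_checks[OF det checks]] assms(4)
    by (auto simp: commute_ZZ_iff)
next
  case False
  have "\<not> XX_parity D k c u" for k c
  proof (cases "\<exists>s\<in>fst ` D. s < u")
    case True
    with False have "\<forall>e\<in>D. fst e < u" by auto
    then show ?thesis by (rule detector_XX_parity_final[OF det checks])
  next
    case False
    show ?thesis
    proof
      assume "XX_parity D k c u"
      then obtain s where "s < u" "(s, XX k c) \<in> D" by (rule XX_parity_imp_measured)
      then show False using False by force
    qed
  qed
  then show ?thesis by simp
qed

text \<open>Along a blue strip the measured ZZ checks transport equality of the parities in two
  adjacent rows; outside the measurement rounds of its XX checks a blue box keeps them equal.\<close>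

lemma detector_XX_parity_blue:
  assumes sol: "solution d R C" and det: "detector (coloring_schedule d R C) D"
  shows "r < d - 1 \<Longrightarrow> c < d - 1 \<Longrightarrow> \<not> C (t mod R) (r, c) \<Longrightarrow>
    XX_parity D r c t \<longleftrightarrow> XX_parity D (Suc r) c t"
proof (induction t arbitrary: c)
  case 0
  show ?case by simp
next
  case (Suc t)
  obtain lo hi c0 where strip: "lo \<le> c" "c \<le> hi" "lo \<le> c0" "c0 \<le> hi" "hi < d - 1"
    "\<not> C (t mod R) (r, c0)" "\<And>k. lo \<le> k \<Longrightarrow> k \<le> hi \<Longrightarrow> \<not> C (Suc t mod R) (r, k)"
    using follows_blue_strip[OF solution_follows[OF sol] Suc.prems] by blast
  have "XX r c0 \<notin> coloring_schedule d R C t" "XX (Suc r) c0 \<notin> coloring_schedule d R C t"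
    using strip Suc.prems(1) by (simp_all add: XX_in_coloring_schedule)
  then have "(t, XX r c0) \<notin> D" "(t, XX (Suc r) c0) \<notin> D"
    using detector_measured[OF det] by blast+
  then have "XX_parity D r c0 (Suc t) \<longleftrightarrow> XX_parity D (Suc r) c0 (Suc t)"
    using Suc.IH[of c0] Suc.prems(1) strip by (simp add: XX_parity_Suc)
  moreover have "(XX_parity D r k (Suc t) \<noteq> XX_parity D (Suc r) k (Suc t)) \<longleftrightarrow>
      (XX_parity D r (Suc k) (Suc t) \<noteq> XX_parity D (Suc r) (Suc k) (Suc t))"
    if "lo \<le> k" "k < hi" for k
  proof -
    have "ZZ r (Suc k) \<in> coloring_schedule d R C (Suc t)"
      using that Suc.prems(1) strip(5,7) by (simp add: ZZ_in_coloring_schedule)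
    then show ?thesis
      using detector_XX_parity_ZZ[OF det coloring_schedule_subset_bs_checks, of r "Suc k" "Suc t"]
      by simp
  qed
  ultimately show ?case
    using iff_along_interval[where P = "\<lambda>k. XX_parity D r k (Suc t) \<noteq> XX_parity D (Suc r) k (Suc t)"
        and lo = lo and hi = hi and i = c and j = c0] strip
    by blast
qed

section \<open>Decomposing detectors\<close>

text \<open>Unlike detectors, column detectors may be empty, so they are closed under symmetric
  difference.\<close>

definition column_detector :: "nat \<Rightarrow> nat \<Rightarrow> (nat \<Rightarrow> coloring) \<Rightarrow> nat \<Rightarrow> event set \<Rightarrow> bool" where
  "column_detector d R C c E \<longleftrightarrow> finite E
     \<and> (\<forall>e\<in>E. \<exists>k. snd e = XX k c \<and> snd e \<in> coloring_schedule d R C (fst e))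
     \<and> (\<forall>u r j. ZZ r j \<in> coloring_schedule d R C u \<longrightarrow> (j = c \<or> j = Suc c) \<longrightarrow>
          (XX_parity E r c u \<longleftrightarrow> XX_parity E (Suc r) c u))
     \<and> (\<exists>U. (\<forall>e\<in>E. fst e < U) \<and> (\<forall>k. \<not> XX_parity E k c U))"

lemma column_detector_other_column:
  assumes "column_detector d R C c E" "c' \<noteq> c"
  shows "\<not> XX_parity E k c' u"
  using assms by (auto simp: column_detector_def elim!: XX_parity_imp_measured)

lemma column_detector_XX_parity_bound:
  assumes "column_detector d R C c E" "XX_parity E k c u"
  shows "k < d"
  using assms
  by (auto simp: column_detector_def XX_in_coloring_schedule elim!: XX_parity_imp_measured)

lemma fst_eprod_prefix_column:
  assumes "column_detector d R C c E"
  shows "(i, j) \<in> fst (eprod {e \<in> E. fst e < u}) \<longleftrightarrow> (j = c \<or> j = Suc c) \<and> XX_parity E i c u"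
proof -
  have "finite E" "\<forall>e\<in>E. snd e \<in> bs_checks d"
    using assms coloring_schedule_subset_bs_checks unfolding column_detector_def by blast+
  then show ?thesis
    using fst_eprod_prefix column_detector_other_column[OF assms]
    by (cases "j = c"; cases "j = Suc c") auto
qed

lemma column_detector_detector:
  assumes col: "column_detector d R C c E" and "E \<noteq> {}"
  shows "detector (coloring_schedule d R C) E"
proof (rule detectorI_prefix)
  have events: "\<forall>e\<in>E. \<exists>k. snd e = XX k c \<and> snd e \<in> coloring_schedule d R C (fst e)"
    and parity: "\<And>u r j. ZZ r j \<in> coloring_schedule d R C u \<Longrightarrow> j = c \<or> j = Suc c \<Longrightarrow>
      XX_parity E r c u \<longleftrightarrow> XX_parity E (Suc r) c u"
    using col by (auto simp: column_detector_def)
  obtain U where U: "\<forall>e\<in>E. fst e < U" "\<forall>k. \<not> XX_parity E k c U"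
    using col by (auto simp: column_detector_def)
  show "finite E" using col by (simp add: column_detector_def)
  show "E \<noteq> {}" by fact
  show "\<forall>(t, p)\<in>E. p \<in> coloring_schedule d R C t" using events by auto
  have "{e \<in> E. fst e < U} = E" using U(1) by auto
  then have "fst (eprod E) = {}"
    using fst_eprod_prefix_column[OF col, of _ _ U] U(2) by auto
  moreover have "snd (eprod E) = {}"
    using events by (intro snd_eprod_XX_events) blast
  ultimately show "eprod E = pid" by (simp add: pid_def prod_eq_iff)
next
  fix u q assume "q \<in> coloring_schedule d R C u"
  then show "commute (eprod {e \<in> E. fst e < u}) q"
  proof (cases rule: coloring_schedule_cases)
    case (1 k c')
    have "snd (eprod {e \<in> E. fst e < u}) = {}"
      using col by (intro snd_eprod_XX_events) (auto simp: column_detector_def)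
    then show ?thesis using 1 by (simp add: commute_XX)
  next
    case (2 r j)
    have "XX_parity E r c u \<longleftrightarrow> XX_parity E (Suc r) c u" if "j = c \<or> j = Suc c"
      using col 2 that unfolding column_detector_def by blast
    then show ?thesis unfolding 2(1) commute_ZZ_iff fst_eprod_prefix_column[OF col] by blast
  qed
qed

definition column_part :: "event set \<Rightarrow> nat \<Rightarrow> event set" where
  "column_part D c = {e \<in> D. \<exists>k. snd e = XX k c}"

lemma XX_parity_column_part: "XX_parity (column_part D c) k c u = XX_parity D k c u"
  by (simp add: XX_parity_def column_part_def)

lemma column_detector_column_part:
  assumes sol: "solution d R C" and det: "detector (coloring_schedule d R C) D" and "c < d - 1"
  shows "column_detector d R C c (column_part D c)"
  unfolding column_detector_def
proof (intro conjI allI impI)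
  show "finite (column_part D c)"
    using detector_finite[OF det] by (simp add: column_part_def)
  show "\<forall>e\<in>column_part D c. \<exists>k. snd e = XX k c \<and> snd e \<in> coloring_schedule d R C (fst e)"
    using detector_measured[OF det] by (force simp: column_part_def)
next
  fix u r j assume "ZZ r j \<in> coloring_schedule d R C u" "j = c \<or> j = Suc c"
  then have "r < d - 1" "\<not> C (u mod R) (r, c)"
    using assms(3) by (auto simp: ZZ_in_coloring_schedule)
  then show "XX_parity (column_part D c) r c u \<longleftrightarrow> XX_parity (column_part D c) (Suc r) c u"
    using detector_XX_parity_blue[OF sol det] assms(3) by (simp add: XX_parity_column_part)
next
  obtain U where U: "\<forall>e\<in>D. fst e < U"
    using detector_finite[OF det] finite_nat_set_iff_bounded[of "fst ` D"] by auto
  then have "\<forall>e\<in>column_part D c. fst e < U"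
    by (simp add: column_part_def)
  moreover have "\<forall>k. \<not> XX_parity (column_part D c) k c U"
    using detector_XX_parity_final[OF det coloring_schedule_subset_bs_checks U]
    by (simp add: XX_parity_column_part)
  ultimately show "\<exists>U. (\<forall>e\<in>column_part D c. fst e < U) \<and> (\<forall>k. \<not> XX_parity (column_part D c) k c U)"
    by blast
qed

lemma column_detector_symd:
  assumes A: "column_detector d R C c A" and B: "column_detector d R C c B"
  shows "column_detector d R C c (symd A B)"
proof -
  obtain UA UB where UA: "\<forall>e\<in>A. fst e < UA" "\<forall>k. \<not> XX_parity A k c UA"
    and UB: "\<forall>e\<in>B. fst e < UB" "\<forall>k. \<not> XX_parity B k c UB"
    using A B by (auto simp: column_detector_def)
  have "\<forall>e\<in>symd A B. fst e < max UA UB"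
    using UA(1) UB(1) by fastforce
  moreover have "\<not> XX_parity (symd A B) k c (max UA UB)" for k
    using XX_parity_after_last[OF UA(1), of "max UA UB"] XX_parity_after_last[OF UB(1), of "max UA UB"]
      UA(2) UB(2) by (simp add: XX_parity_symd)
  moreover have "\<forall>e\<in>symd A B. \<exists>k. snd e = XX k c \<and> snd e \<in> coloring_schedule d R C (fst e)"
    using A B unfolding column_detector_def symd_def by blast
  ultimately show ?thesis
    using A B by (simp add: column_detector_def finite_symd XX_parity_symd) blast
qed

text \<open>Measuring in round u the XX checks of odd parity closes all parities; these checks are
  measured when the column is fully red in round u.\<close>

definition column_cut :: "event set \<Rightarrow> nat \<Rightarrow> nat \<Rightarrow> event set" where
  "column_cut E c u = {e \<in> E. fst e < u} \<union> {(u, XX k c) | k. XX_parity E k c u}"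

lemma XX_parity_column_cut:
  "XX_parity (column_cut E c u') k c u \<longleftrightarrow> u \<le> u' \<and> XX_parity E k c u"
proof (cases "u \<le> u'")
  case True
  have "{s. s < u \<and> (s, XX k c) \<in> column_cut E c u'} = {s. s < u \<and> (s, XX k c) \<in> E}"
    using True by (auto simp: column_cut_def)
  then show ?thesis using True by (simp add: XX_parity_def)
next
  case False
  have before: "XX_parity (column_cut E c u') k c u' \<longleftrightarrow> XX_parity E k c u'"
    unfolding XX_parity_def by (rule arg_cong[where f = "\<lambda>A. odd (card A)"]) (auto simp: column_cut_def)
  have "\<forall>e\<in>column_cut E c u'. fst e < Suc u'"
    by (auto simp: column_cut_def)
  then have "XX_parity (column_cut E c u') k c u = XX_parity (column_cut E c u') k c (Suc u')"
    using False by (intro XX_parity_after_last) auto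
  also have "\<dots> \<longleftrightarrow> False"
    using before by (simp add: XX_parity_Suc column_cut_def)
  finally show ?thesis using False by simp
qed

lemma column_detector_column_cut:
  assumes col: "column_detector d R C c E" and "c < d - 1" and red: "\<forall>r<d - 1. C (u' mod R) (r, c)"
  shows "column_detector d R C c (column_cut E c u')"
  unfolding column_detector_def
proof (intro conjI allI impI)
  have "{(u', XX k c) | k. XX_parity E k c u'} \<subseteq> (\<lambda>k. (u', XX k c)) ` {..<d}"
    using column_detector_XX_parity_bound[OF col] by blast
  then have "finite {(u', XX k c) | k. XX_parity E k c u'}"
    by (rule finite_subset) simp
  then show "finite (column_cut E c u')"
    using col by (simp add: column_cut_def column_detector_def)
  have "XX k c \<in> coloring_schedule d R C u'" if "XX_parity E k c u'" for k
    using column_detector_XX_parity_bound[OF col that] assms(2) red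
    by (simp add: XX_in_coloring_schedule)
  then show "\<forall>e\<in>column_cut E c u'. \<exists>k. snd e = XX k c \<and> snd e \<in> coloring_schedule d R C (fst e)"
    using col by (auto simp: column_cut_def column_detector_def)
next
  fix u r j assume "ZZ r j \<in> coloring_schedule d R C u" "j = c \<or> j = Suc c"
  then have "XX_parity E r c u \<longleftrightarrow> XX_parity E (Suc r) c u"
    using col unfolding column_detector_def by blast
  then show "XX_parity (column_cut E c u') r c u \<longleftrightarrow> XX_parity (column_cut E c u') (Suc r) c u"
    by (simp add: XX_parity_column_cut)
next
  have "\<forall>e\<in>column_cut E c u'. fst e < Suc u'"
    by (auto simp: column_cut_def)
  then show "\<exists>U. (\<forall>e\<in>column_cut E c u'. fst e < U) \<and> (\<forall>k. \<not> XX_parity (column_cut E c u') k c U)"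
    by (auto simp: XX_parity_column_cut)
qed

lemma column_detector_light_sum_window:
  assumes col: "column_detector d R C c E" and "0 < R"
    and window: "\<forall>e\<in>E. a \<le> fst e \<and> fst e \<le> a + R"
  shows "light_detector_sum (coloring_schedule d R C) (4 * R * d) E"
proof (cases "E = {}")
  case True
  then show ?thesis by (simp add: light_detector_sum_empty)
next
  case False
  have events: "\<forall>e\<in>E. \<exists>k. snd e = XX k c \<and> snd e \<in> coloring_schedule d R C (fst e)"
    using col by (simp add: column_detector_def)
  have "E \<subseteq> {a..a + R} \<times> ((\<lambda>k. XX k c) ` {..<d})"
  proof
    fix e assume "e \<in> E"
    with events obtain k where "snd e = XX k c" "XX k c \<in> coloring_schedule d R C (fst e)"
      by auto
    then show "e \<in> {a..a + R} \<times> ((\<lambda>k. XX k c) ` {..<d})"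
      using window \<open>e \<in> E\<close> by (cases e) (auto simp: XX_in_coloring_schedule)
  qed
  then have "card E \<le> card ({a..a + R} \<times> ((\<lambda>k. XX k c) ` {..<d}))"
    by (rule card_mono[rotated]) simp
  also have "\<dots> = (R + 1) * card ((\<lambda>k. XX k c) ` {..<d})"
    by (simp add: card_cartesian_product)
  also have "\<dots> \<le> (R + 1) * d"
    using card_image_le[of "{..<d}" "\<lambda>k. XX k c"] by (intro mult_le_mono2) simp
  finally have "card E \<le> (R + 1) * d" .
  moreover have "det_weight E = (\<Sum>e\<in>E. 2)"
    unfolding det_weight_def using events by (intro sum.cong) (auto simp: pweight_XX)
  then have "det_weight E = 2 * card E" by simp
  moreover have "(R + 1) * d \<le> 2 * R * d"
    using mult_le_mono1[of "R + 1" "2 * R" d] \<open>0 < R\<close> by simp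
  ultimately have "det_weight E \<le> 4 * R * d" by linarith
  then show ?thesis
    by (rule light_detector_sum_detector[OF column_detector_detector[OF col False]])
qed

lemma exists_mod_in_window:
  fixes j R m :: nat
  assumes "j < R" "R \<le> m"
  shows "\<exists>u. u mod R = j \<and> u < m \<and> m \<le> u + R"
proof -
  define x where "x = m - 1 - j"
  have "R * (x div R) + x mod R = x" "x mod R < R" "x + j + 1 = m"
    using assms by (simp_all add: x_def)
  then have "j + R * (x div R) < m" "m \<le> j + R * (x div R) + R"
    by linarith+
  moreover have "(j + R * (x div R)) mod R = j"
    using assms(1) by simp
  ultimately show ?thesis by blast
qed

text \<open>Cutting a column detector at the last fully red round of its column before the final
  round leaves one piece that spans at most R + 1 rounds.\<close>

lemma column_detector_light_sum:
  assumes sol: "solution d R C" and c: "c < d - 1"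
  shows "column_detector d R C c E \<Longrightarrow> \<forall>e\<in>E. fst e < n \<Longrightarrow>
    light_detector_sum (coloring_schedule d R C) (4 * R * d) E"
proof (induction n arbitrary: E rule: less_induct)
  case (less n)
  have R: "0 < R" using sol by (simp add: solution_def)
  show ?case
  proof (cases "n \<le> R")
    case True
    then show ?thesis
      using column_detector_light_sum_window[OF less.prems(1) R, of 0] less.prems(2) by fastforce
  next
    case False
    obtain j where j: "j < R" "\<forall>r<d - 1. C j (r, c)"
      using sol c unfolding solution_def by blast
    have "R \<le> n - 1" using False by simp
    then obtain u where u: "u mod R = j" "u < n - 1" "n - 1 \<le> u + R"
      using exists_mod_in_window[OF j(1)] by blast
    define A where "A = column_cut E c u"
    have colA: "column_detector d R C c A"
      unfolding A_def using column_detector_column_cut[OF less.prems(1) c] j(2) u(1) by simp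
    have "\<forall>e\<in>A. fst e < Suc u"
      by (auto simp: A_def column_cut_def)
    then have "light_detector_sum (coloring_schedule d R C) (4 * R * d) A"
      using less.IH[of "Suc u" A] colA u(2) by simp
    moreover have "light_detector_sum (coloring_schedule d R C) (4 * R * d) (symd A E)"
    proof (rule column_detector_light_sum_window[OF column_detector_symd[OF colA less.prems(1)] R])
      show "\<forall>e\<in>symd A E. u \<le> fst e \<and> fst e \<le> u + R"
      proof
        fix e assume "e \<in> symd A E"
        then have "e \<in> E \<and> u \<le> fst e \<or> fst e = u"
          by (auto simp: A_def column_cut_def)
        moreover have "e \<in> E \<Longrightarrow> fst e < n" using less.prems(2) by blast
        ultimately show "u \<le> fst e \<and> fst e \<le> u + R" using u by auto
      qed
    qed
    ultimately show ?thesis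
      using light_detector_sum_symd[of _ _ A "symd A E"] by simp
  qed
qed

definition X_events :: "event set \<Rightarrow> event set" where
  "X_events D = {e \<in> D. \<exists>k c. snd e = XX k c}"

definition Z_events :: "event set \<Rightarrow> event set" where
  "Z_events D = {e \<in> D. \<exists>r j. snd e = ZZ r j}"

lemma X_events_light_sum:
  assumes sol: "solution d R C" and det: "detector (coloring_schedule d R C) D"
  shows "light_detector_sum (coloring_schedule d R C) (4 * R * d) (X_events D)"
proof -
  have measured: "c < d - 1" if "(t, XX k c) \<in> D" for t k c
    using detector_measured[OF det that] by (simp add: XX_in_coloring_schedule)
  have columns: "light_detector_sum (coloring_schedule d R C) (4 * R * d)
      {e \<in> D. \<exists>k c. c < n \<and> snd e = XX k c}" for n
  proof (induction n)
    case 0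
    then show ?case by (simp add: light_detector_sum_empty)
  next
    case (Suc n)
    have "{e \<in> D. \<exists>k c. c < Suc n \<and> snd e = XX k c} =
        symd {e \<in> D. \<exists>k c. c < n \<and> snd e = XX k c} (column_part D n)"
      by (auto simp: column_part_def less_Suc_eq)
    moreover have "light_detector_sum (coloring_schedule d R C) (4 * R * d) (column_part D n)"
    proof (cases "n < d - 1")
      case True
      obtain U where "\<forall>e\<in>D. fst e < U"
        using detector_finite[OF det] finite_nat_set_iff_bounded[of "fst ` D"] by auto
      then have "\<forall>e\<in>column_part D n. fst e < U"
        by (simp add: column_part_def)
      then show ?thesis
        by (rule column_detector_light_sum[OF sol True column_detector_column_part[OF sol det True]])
    next
      case False
      then have "column_part D n = {}"
        using measured by (force simp: column_part_def)
      then show ?thesis by (simp add: light_detector_sum_empty)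
    qed
    ultimately show ?case using Suc.IH by (simp add: light_detector_sum_symd)
  qed
  have "{e \<in> D. \<exists>k c. c < d - 1 \<and> snd e = XX k c} = X_events D"
    using measured by (force simp: X_events_def)
  then show ?thesis using columns[of "d - 1"] by simp
qed

lemma Z_events_dual: "dual_event ` X_events (dual_event ` D) = Z_events D"
proof (rule set_eqI)
  fix e
  have "e \<in> dual_event ` X_events (dual_event ` D) \<longleftrightarrow> dual_event e \<in> X_events (dual_event ` D)"
    by (rule mem_dual_event_image_iff)
  also have "\<dots> \<longleftrightarrow> e \<in> Z_events D"
    by (auto simp: X_events_def Z_events_def mem_dual_event_image_iff snd_dual_event
      dual_pauli_eq_XX_iff)
  finally show "e \<in> dual_event ` X_events (dual_event ` D) \<longleftrightarrow> e \<in> Z_events D" .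
qed

lemma detector_light_sum:
  assumes sol: "solution d R C" and det: "detector (coloring_schedule d R C) D"
  shows "light_detector_sum (coloring_schedule d R C) (4 * R * d) D"
proof -
  let ?C' = "\<lambda>j. dual_coloring (C j)"
  have schedule_dual: "(\<lambda>t. dual_pauli ` coloring_schedule d R ?C' t) = coloring_schedule d R C"
    by (simp add: coloring_schedule_dual image_image)
  have "detector (coloring_schedule d R ?C') (dual_event ` D)"
    using detector_dual[OF det] by (simp add: coloring_schedule_dual)
  then have "light_detector_sum (coloring_schedule d R ?C') (4 * R * d) (X_events (dual_event ` D))"
    by (rule X_events_light_sum[OF solution_dual[OF sol]])
  then have "light_detector_sum (coloring_schedule d R C) (4 * R * d) (Z_events D)"
    using light_detector_sum_dual by (fastforce simp: schedule_dual Z_events_dual)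
  with X_events_light_sum[OF sol det]
  have "light_detector_sum (coloring_schedule d R C) (4 * R * d) (symd (X_events D) (Z_events D))"
    by (rule light_detector_sum_symd)
  moreover have "symd (X_events D) (Z_events D) = D"
    using detector_checks[OF det coloring_schedule_subset_bs_checks]
    by (auto simp: X_events_def Z_events_def bs_checks_def)
  ultimately show ?thesis by simp
qed

theorem theorem2:
  "\<exists>c::nat. \<forall>d R C. 2 \<le> d \<and> solution d R C \<longrightarrow>
     (\<exists>M. schedule d R M
        \<and> (\<exists>t0 k. \<forall>t\<ge>t0.
              isg M (t + R) = isg M t
            \<and> (\<forall>b\<in>boxes d.
                 (C ((t + k) mod R) b \<longrightarrow> Xbar d b \<in> isg M (Suc t))
               \<and> (\<not> C ((t + k) mod R) b \<longrightarrow> Zbar d b \<in> isg M (Suc t))))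
        \<and> (\<forall>D. detector M D \<longrightarrow>
              (\<exists>F. finite F \<and> (\<forall>D'\<in>F. detector M D' \<and> det_weight D' \<le> c * R * d)
                   \<and> D = symd_family F)))"
  apply (intro exI[of _ 4] allI impI)
  subgoal premises prems for d R C
  proof -
    from prems have d: "2 \<le> d" and sol: "solution d R C" by auto
    let ?M = "coloring_schedule d R C"
    have schedule: "schedule d R ?M" by (rule schedule_coloring_schedule)
    obtain t0 where "\<forall>t\<ge>t0. isg ?M (t + R) = isg ?M t"
      using isg_eventually_periodic[OF schedule] by blast
    then have "\<forall>t\<ge>max t0 R. isg ?M (t + R) = isg ?M t \<and> (\<forall>b\<in>boxes d.
        (C ((t + 0) mod R) b \<longrightarrow> Xbar d b \<in> isg ?M (Suc t))
      \<and> (\<not> C ((t + 0) mod R) b \<longrightarrow> Zbar d b \<in> isg ?M (Suc t)))"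
      using coloring_schedule_steady_state[OF d sol] by simp
    moreover have "\<forall>D. detector ?M D \<longrightarrow> (\<exists>F. finite F
        \<and> (\<forall>D'\<in>F. detector ?M D' \<and> det_weight D' \<le> 4 * R * d) \<and> D = symd_family F)"
      using detector_light_sum[OF sol] unfolding light_detector_sum_def by blast
    ultimately show ?thesis using schedule by blast
  qed
  done

end
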